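(* Consider $\mathrm{USD}_p$ with $p\in[0,1]$ and let $c_s>0$ be an arbitrary constant. Let $\mathbf{x}(t_0)$ be a configuration at time $t_0$ with weighted bias $\Delta_w(t_0) \geq c_s n$. Let $T_1 := \inf\{t \geq t_0 : x_2(t) = 0\}$. Then $\Pr[T_1 - t_0 \leq 20 c_s^{-1} n\log n] \geq 1-n^{-2}$.
   Context: Population protocol with $n$ agents, each in a state from $\{1,2,\bot\}$ (Opinion 1, Opinion 2, undecided). At each time step a scheduler picks an ordered pair $(i,j)$ of agents uniformly at random, independently of the past; only the initiator $i$ changes state. In $\mathrm{USD}_p$: if the initiator is $2$ and the responder $1$, the initiator becomes $\bot$; if the initiator is $1$ and the responder $2$, the initiator becomes $\bot$ with probability $1-p$ and otherwise stays $1$; if the initiator is $\bot$, it adopts the responder's state; otherwise nothing changes. $x_1(t),x_2(t),u(t)$ are the numbers of agents in states $1,2,\bot$ after $t$ interactions. The weighted bias is $\Delta_w(t) := x_1(t) - (1-p)x_2(t)$. *)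

theory Defs
  imports "HOL-Probability.Probability_Mass_Function"
begin

datatype st = One | Two | Und

text \<open>A configuration of n agents: agent i (for i < n) is in state cfg i.\<close>
type_synonym cfg = "nat \<Rightarrow> st"

definition cnt1 :: "nat \<Rightarrow> cfg \<Rightarrow> nat" where
  "cnt1 n c = card {i. i < n \<and> c i = One}"

definition cnt2 :: "nat \<Rightarrow> cfg \<Rightarrow> nat" where
  "cnt2 n c = card {i. i < n \<and> c i = Two}"

definition cntU :: "nat \<Rightarrow> cfg \<Rightarrow> nat" where
  "cntU n c = card {i. i < n \<and> c i = Und}"

definition wbias :: "real \<Rightarrow> nat \<Rightarrow> cfg \<Rightarrow> real" where
  "wbias p n c = real (cnt1 n c) - (1 - p) * real (cnt2 n c)"

text \<open>New state of the initiator (first argument) after meeting the responder.\<close>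
definition usd_interact :: "real \<Rightarrow> st \<Rightarrow> st \<Rightarrow> st pmf" where
  "usd_interact p a b =
     (if a = Two \<and> b = One then return_pmf Und
      else if a = One \<and> b = Two then
        map_pmf (\<lambda>becomes_und. if becomes_und then Und else One) (bernoulli_pmf (1 - p))
      else if a = Und then return_pmf b
      else return_pmf a)"

definition usd_step :: "nat \<Rightarrow> real \<Rightarrow> cfg \<Rightarrow> cfg pmf" where
  "usd_step n p c =
     bind_pmf (pmf_of_set {(i, j). i < n \<and> j < n \<and> i \<noteq> j})
       (\<lambda>(i, j). map_pmf (\<lambda>s. c(i := s)) (usd_interact p (c i) (c j)))"

text \<open>Distribution of the trajectory [x(t0), x(t0+1), ..., x(t0+k)] started in c.\<close>
fun usd_traj :: "nat \<Rightarrow> real \<Rightarrow> nat \<Rightarrow> cfg \<Rightarrow> cfg list pmf" where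
  "usd_traj n p 0 c = return_pmf [c]"
| "usd_traj n p (Suc k) c =
     bind_pmf (usd_step n p c) (\<lambda>c'. map_pmf (\<lambda>xs. c # xs) (usd_traj n p k c'))"

end

theory Submission
  imports Defs "HOL-Real_Asymp.Real_Asymp"
begin

text \<open>
  While the weighted bias stays above \<open>c\<^sub>s n / 2\<close>, two potentials control the process.
  The ratio \<open>V = n x\<^sub>2 / x\<^sub>1\<close> contracts in expectation by the factor
  \<open>1 - 2 c\<^sub>s / (5 n)\<close> per interaction and is at least 1 as long as opinion 2
  survives, so after \<open>20 c\<^sub>s\<^sup>-\<^sup>1 n ln n\<close> interactions it is tiny in expectation.
  The weighted bias has nonnegative drift (proportional to \<open>u \<Delta>\<^sub>w\<close>), hence
  \<open>U = exp (- \<lambda> (\<Delta>\<^sub>w - c\<^sub>s n / 2))\<close> grows by at most \<open>1 + 2 \<lambda>\<^sup>2\<close> per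
  interaction; as \<open>U \<ge> 1\<close> once the bias has dropped below \<open>c\<^sub>s n / 2\<close> while
  initially \<open>U \<le> exp (- \<lambda> c\<^sub>s n / 2)\<close>, the bias leaves that region within the
  time window only with probability \<open>exp (- \<Omega> (n / log n))\<close>. Stopping both potentials
  when the bias leaves the region, the probability that opinion 2 survives is at most the sum
  of the two estimates.
\<close>

section \<open>Counting agents\<close>

lemma card_agents_Suc:
  "card {i. i < Suc n \<and> c i = s} = card {i. i < n \<and> c i = s} + of_bool (c n = s)"
proof -
  have "{i. i < Suc n \<and> c i = s}
      = (if c n = s then insert n {i. i < n \<and> c i = s} else {i. i < n \<and> c i = s})"
    by (auto simp: less_Suc_eq)
  then show ?thesis by simp
qed

lemma sum_over_agents:
  "(\<Sum>i<n. \<phi> (c i) :: real) =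
     real (cnt1 n c) * \<phi> One + real (cnt2 n c) * \<phi> Two + real (cntU n c) * \<phi> Und"
proof (induction n)
  case (Suc n)
  then show ?case
    by (cases "c n") (simp_all add: cnt1_def cnt2_def cntU_def card_agents_Suc algebra_simps)
qed (simp add: cnt1_def cnt2_def cntU_def)

lemma real_cnt_total: "real (cnt1 n c) + real (cnt2 n c) + real (cntU n c) = real n"
  using sum_over_agents[where \<phi>="\<lambda>_. 1" and n=n and c=c] by simp

lemma card_agents_fun_upd:
  fixes c :: cfg
  assumes "i < n"
  shows "card {k. k < n \<and> (c(i := s)) k = a} + of_bool (c i = a)
       = card {k. k < n \<and> c k = a} + of_bool (s = a)"
proof -
  have split_i: "card {k. k < n \<and> P k} = card {k. k < n \<and> k \<noteq> i \<and> P k} + of_bool (P i)" for P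
  proof -
    have "{k. k < n \<and> P k}
        = (if P i then insert i {k. k < n \<and> k \<noteq> i \<and> P k} else {k. k < n \<and> k \<noteq> i \<and> P k})"
      using assms by auto
    moreover have "finite {k. k < n \<and> k \<noteq> i \<and> P k}"
      by (simp add: finite_Collect_conjI)
    ultimately show ?thesis by simp
  qed
  have "{k. k < n \<and> k \<noteq> i \<and> (c(i := s)) k = a} = {k. k < n \<and> k \<noteq> i \<and> c k = a}"
    by auto
  then show ?thesis
    using split_i[of "\<lambda>k. (c(i := s)) k = a"] split_i[of "\<lambda>k. c k = a"] by simp
qed

lemma real_cnt_fun_upd:
  assumes "i < n"
  shows "real (cnt1 n (c(i := s))) = real (cnt1 n c) - of_bool (c i = One) + of_bool (s = One)"
    and "real (cnt2 n (c(i := s))) = real (cnt2 n c) - of_bool (c i = Two) + of_bool (s = Two)"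
proof -
  have "cnt1 n (c(i := s)) + of_bool (c i = One) = cnt1 n c + of_bool (s = One)"
    and "cnt2 n (c(i := s)) + of_bool (c i = Two) = cnt2 n c + of_bool (s = Two)"
    unfolding cnt1_def cnt2_def by (rule card_agents_fun_upd[OF assms])+
  from this[THEN arg_cong[where f = real]]
  show "real (cnt1 n (c(i := s))) = real (cnt1 n c) - of_bool (c i = One) + of_bool (s = One)"
    and "real (cnt2 n (c(i := s))) = real (cnt2 n c) - of_bool (c i = Two) + of_bool (s = Two)"
    by simp_all
qed

lemma wbias_le_cnt1: "p \<le> 1 \<Longrightarrow> wbias p n c \<le> real (cnt1 n c)"
  by (simp add: wbias_def)

section \<open>Drift of a function of the counts\<close>

definition interaction_mean ::
    "real \<Rightarrow> (real \<Rightarrow> real \<Rightarrow> real) \<Rightarrow> real \<Rightarrow> real \<Rightarrow> st \<Rightarrow> st \<Rightarrow> real" where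
  "interaction_mean p f x y s t =
    (if s = Two \<and> t = One then f x (y - 1)
     else if s = One \<and> t = Two then (1 - p) * f (x - 1) y + p * f x y
     else if s = Und \<and> t = One then f (x + 1) y
     else if s = Und \<and> t = Two then f x (y + 1)
     else f x y)"

lemma expectation_usd_interact:
  assumes "i < n" "0 \<le> p" "p \<le> 1"
  shows "measure_pmf.expectation (map_pmf (\<lambda>s. c(i := s)) (usd_interact p (c i) t))
           (\<lambda>c'. f (real (cnt1 n c')) (real (cnt2 n c')))
       = interaction_mean p f (real (cnt1 n c)) (real (cnt2 n c)) (c i) t"
  using assms
  by (cases "c i"; cases t) (simp_all add: usd_interact_def interaction_mean_def real_cnt_fun_upd)

lemma finite_set_usd_interact: "finite (set_pmf (usd_interact p a b))"
  by (simp add: usd_interact_def)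

definition agent_pairs :: "nat \<Rightarrow> (nat \<times> nat) set" where
  "agent_pairs n = {(i, j). i < n \<and> j < n \<and> i \<noteq> j}"

lemma agent_pairs_eq_Sigma: "agent_pairs n = Sigma {..<n} (\<lambda>i. {..<n} - {i})"
  by (auto simp: agent_pairs_def)

lemma finite_agent_pairs: "finite (agent_pairs n)"
  by (simp add: agent_pairs_eq_Sigma)

lemma card_agent_pairs: "card (agent_pairs n) = n * (n - 1)"
  by (simp add: agent_pairs_eq_Sigma card_SigmaI)

lemma agent_pairs_nonempty: "n \<ge> 2 \<Longrightarrow> agent_pairs n \<noteq> {}"
proof -
  assume "n \<ge> 2"
  then have "(0, 1) \<in> agent_pairs n" by (simp add: agent_pairs_def)
  then show ?thesis by blast
qed

lemma finite_set_usd_step: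
  assumes "n \<ge> 2"
  shows "finite (set_pmf (usd_step n p c))"
proof -
  have "set_pmf (usd_step n p c)
      = (\<Union>(i, j)\<in>agent_pairs n. (\<lambda>s. c(i := s)) ` set_pmf (usd_interact p (c i) (c j)))"
    using agent_pairs_nonempty[OF assms] finite_agent_pairs
    by (auto simp: usd_step_def agent_pairs_def[symmetric])
  then show ?thesis
    using finite_agent_pairs finite_set_usd_interact by auto
qed

lemma usd_step_expectation:
  assumes "n \<ge> 2"
  shows "real n * (real n - 1) * measure_pmf.expectation (usd_step n p c) h
       = (\<Sum>(i, j)\<in>agent_pairs n.
            measure_pmf.expectation (map_pmf (\<lambda>s. c(i := s)) (usd_interact p (c i) (c j))) h)"
proof -
  have card: "real n * (real n - 1) = real (card (agent_pairs n))"
    using assms by (simp add: card_agent_pairs of_nat_diff)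
  have nonzero: "card (agent_pairs n) \<noteq> 0"
    using agent_pairs_nonempty[OF assms] finite_agent_pairs by simp
  have cancel: "real (card (agent_pairs n)) * (inverse (real (card (agent_pairs n))) * e) = e" for e
    using nonzero by simp
  show ?thesis
    unfolding usd_step_def agent_pairs_def[symmetric] card
    using agent_pairs_nonempty[OF assms] finite_agent_pairs finite_set_usd_interact
    by (subst pmf_expectation_bind_pmf_of_set) (auto simp: sum_distrib_left case_prod_unfold cancel)
qed

lemma usd_step_drift:
  fixes c :: cfg and f :: "real \<Rightarrow> real \<Rightarrow> real"
  assumes "n \<ge> 2" "0 \<le> p" "p \<le> 1"
  defines "x \<equiv> real (cnt1 n c)" and "y \<equiv> real (cnt2 n c)" and "u \<equiv> real (cntU n c)"
  shows "real n * (real n - 1)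
           * (measure_pmf.expectation (usd_step n p c) (\<lambda>c'. f (real (cnt1 n c')) (real (cnt2 n c')))
              - f x y)
       = x * y * (1 - p) * (f (x - 1) y - f x y) + y * x * (f x (y - 1) - f x y)
         + u * x * (f (x + 1) y - f x y) + u * y * (f x (y + 1) - f x y)"
proof -
  let ?H = "interaction_mean p f x y"
  let ?E = "measure_pmf.expectation (usd_step n p c) (\<lambda>c'. f (real (cnt1 n c')) (real (cnt2 n c')))"
  have n: "real n = x + y + u"
    using real_cnt_total[of n c] unfolding x_def y_def u_def by simp
  have "real n * (real n - 1) * ?E = (\<Sum>(i, j)\<in>agent_pairs n. ?H (c i) (c j))"
    unfolding usd_step_expectation[OF assms(1)] x_def y_def
    by (intro sum.cong refl)
       (auto simp: agent_pairs_def expectation_usd_interact assms(2,3) simp del: integral_map_pmf)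
  also have "\<dots> = (\<Sum>i<n. (\<Sum>j<n. ?H (c i) (c j)) - ?H (c i) (c i))"
    by (simp add: agent_pairs_eq_Sigma sum.Sigma[symmetric] sum_diff1)
  also have "\<dots> = (\<Sum>i<n. x * ?H (c i) One + y * ?H (c i) Two + u * ?H (c i) Und) - real n * f x y"
  proof -
    have "?H s s = f x y" for s
      by (cases s) (simp_all add: interaction_mean_def)
    then show ?thesis
      by (simp add: sum_subtractf sum_over_agents x_def y_def u_def algebra_simps)
  qed
  also have "\<dots> = x * (x * f x y + y * ((1 - p) * f (x - 1) y + p * f x y) + u * f x y)
                 + y * (x * f x (y - 1) + y * f x y + u * f x y)
                 + u * (x * f (x + 1) y + y * f x (y + 1) + u * f x y) - real n * f x y"
    by (subst sum_over_agents) (simp add: x_def y_def u_def interaction_mean_def)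
  finally have E: "real n * (real n - 1) * ?E = \<dots>" .
  have "real n * (real n - 1) * (?E - f x y)
      = real n * (real n - 1) * ?E - real n * (real n - 1) * f x y"
    by (simp add: algebra_simps)
  also have "\<dots> = x * y * (1 - p) * (f (x - 1) y - f x y) + y * x * (f x (y - 1) - f x y)
         + u * x * (f (x + 1) y - f x y) + u * y * (f x (y + 1) - f x y)"
    unfolding E by (simp add: n algebra_simps)
  finally show ?thesis .
qed

section \<open>Stopped potentials along a trajectory\<close>

lemma finite_set_usd_traj: "n \<ge> 2 \<Longrightarrow> finite (set_pmf (usd_traj n p k c))"
  by (induction k arbitrary: c) (simp_all add: finite_set_usd_step)

lemma length_usd_traj: "xs \<in> set_pmf (usd_traj n p k c) \<Longrightarrow> length xs = Suc k"
  by (induction k arbitrary: c xs) auto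

lemma last_usd_traj_Suc:
  "map_pmf last (usd_traj n p (Suc k) c)
     = usd_step n p c \<bind> (\<lambda>c'. map_pmf last (usd_traj n p k c'))"
proof -
  have "map_pmf (\<lambda>xs. last (c # xs)) (usd_traj n p k c') = map_pmf last (usd_traj n p k c')" for c'
    by (rule map_pmf_cong) (auto dest: length_usd_traj)
  then show ?thesis
    by (simp only: usd_traj.simps map_bind_pmf map_pmf_comp)
qed

lemma prob_unabsorbed_le_potentials:
  fixes U V :: "cfg \<Rightarrow> real" and G :: "cfg \<Rightarrow> bool"
  assumes "n \<ge> 2" and "\<theta> \<ge> 0" and "\<rho> \<ge> 1"
    and U_nonneg: "\<And>c. U c \<ge> 0" and V_nonneg: "\<And>c. V c \<ge> 0"
    and U_outside: "\<And>c. \<not> G c \<Longrightarrow> U c \<ge> 1"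
    and V_unabsorbed: "\<And>c. G c \<Longrightarrow> cnt2 n c \<noteq> 0 \<Longrightarrow> V c \<ge> 1"
    and U_drift: "\<And>c. G c \<Longrightarrow> measure_pmf.expectation (usd_step n p c) U \<le> \<rho> * U c"
    and V_drift: "\<And>c. G c \<Longrightarrow> measure_pmf.expectation (usd_step n p c) V \<le> \<theta> * V c"
  shows "measure_pmf.prob (map_pmf last (usd_traj n p k c)) {c'. cnt2 n c' \<noteq> 0}
         \<le> \<rho> ^ k * U c + \<theta> ^ k * V c"
proof (induction k arbitrary: c)
  case 0
  show ?case
    using U_outside[of c] V_unabsorbed[of c] U_nonneg[of c] V_nonneg[of c]
    by (cases "G c") (auto simp: indicator_def)
next
  case (Suc k)
  let ?M = "usd_step n p c"
  let ?A = "{c'. cnt2 n c' \<noteq> 0}"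
  show ?case
  proof (cases "G c")
    case False
    have "measure_pmf.prob (map_pmf last (usd_traj n p (Suc k) c)) ?A \<le> U c"
      using U_outside[OF False] by (simp add: order_trans[OF measure_pmf.prob_le_1])
    also have "\<dots> \<le> \<rho> ^ Suc k * U c"
      using mult_right_mono[OF one_le_power[OF \<open>\<rho> \<ge> 1\<close>, of "Suc k"] U_nonneg[of c]] by simp
    also have "\<dots> \<le> \<rho> ^ Suc k * U c + \<theta> ^ Suc k * V c"
      using V_nonneg[of c] \<open>\<theta> \<ge> 0\<close> by simp
    finally show ?thesis .
  next
    case True
    have prob_eq_expectation_indicator:
      "measure_pmf.prob M B = measure_pmf.expectation M (indicator B)" for M :: "cfg pmf" and B
      by simp
    have fin: "finite (set_pmf ?M)"
      using finite_set_usd_step[OF \<open>n \<ge> 2\<close>] .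
    have "measure_pmf.prob (map_pmf last (usd_traj n p (Suc k) c)) ?A
        = (\<Sum>c'\<in>set_pmf ?M. pmf ?M c' * measure_pmf.prob (map_pmf last (usd_traj n p k c')) ?A)"
      unfolding last_usd_traj_Suc prob_eq_expectation_indicator
      using fin finite_set_usd_traj[OF \<open>n \<ge> 2\<close>] by (subst pmf_expectation_bind) auto
    also have "\<dots> \<le> (\<Sum>c'\<in>set_pmf ?M. pmf ?M c' * (\<rho> ^ k * U c' + \<theta> ^ k * V c'))"
      by (intro sum_mono mult_left_mono Suc.IH) simp
    also have "\<dots> = \<rho> ^ k * measure_pmf.expectation ?M U + \<theta> ^ k * measure_pmf.expectation ?M V"
      by (simp add: integral_measure_pmf_real[OF fin] sum_distrib_left sum.distrib algebra_simps)
    also have "\<dots> \<le> \<rho> ^ k * (\<rho> * U c) + \<theta> ^ k * (\<theta> * V c)"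
      using U_drift[OF True] V_drift[OF True] \<open>\<rho> \<ge> 1\<close> \<open>\<theta> \<ge> 0\<close>
      by (intro add_mono mult_left_mono) auto
    finally show ?thesis by (simp add: algebra_simps)
  qed
qed

section \<open>The ratio and the exponential potential\<close>

lemma exp_le_quadratic:
  fixes y :: real
  assumes "\<bar>y\<bar> \<le> 1"
  shows "exp y \<le> 1 + y + y\<^sup>2"
proof (cases "y \<ge> 0")
  case True
  then show ?thesis using exp_bound[of y] assms by simp
next
  case False
  define t where "t = - y"
  have t: "0 < t" "t \<le> 1" using False assms by (auto simp: t_def)
  have "exp (- t) * (1 + t) \<le> exp (- t) * exp t"
    by (intro mult_left_mono) (auto simp: exp_ge_add_one_self add.commute)
  also have "\<dots> = 1" by (simp add: exp_minus)
  finally have "exp (- t) * (1 + t) \<le> 1" .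
  also have "1 \<le> (1 - t + t\<^sup>2) * (1 + t)"
    using t by (simp add: algebra_simps power2_eq_square power3_eq_cube)
  finally have "exp (- t) \<le> 1 - t + t\<^sup>2"
    using t by (simp add: mult_le_cancel_right)
  then show ?thesis by (simp add: t_def)
qed

lemma ratio_drift_le:
  fixes x y u n q cs :: real
  assumes "cs > 0" and bias: "x - q * y \<ge> cs * n / 2" and "8 \<le> cs * n" and "80 \<le> cs * cs * n"
    and "0 \<le> q" "q \<le> 1" "y \<ge> 0" "u \<ge> 0" and total: "x + y + u = n"
  shows "x * y * q * (n * y / (x - 1) - n * y / x) + y * x * (n * (y - 1) / x - n * y / x)
         + u * x * (n * y / (x + 1) - n * y / x) + u * y * (n * (y + 1) / x - n * y / x)
       \<le> n * (n - 1) * (- (2 * cs / (5 * n)) * (n * y / x))"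
proof -
  have "q * y \<ge> 0" "q * y \<le> n"
    using assms mult_left_le_one_le[of y q] by auto
  then have x1: "x - 1 \<ge> cs * n / 4" and x_pos: "x > 1"
    using bias \<open>8 \<le> cs * n\<close> by linarith+
  have n_pos: "n > 0" using x_pos total \<open>y \<ge> 0\<close> \<open>u \<ge> 0\<close> by linarith
  define B where "B = q * y / (x - 1) - 1 - u / (x + 1) + u / x"
  have "x - 1 \<noteq> 0" "x \<noteq> 0" "x + 1 \<noteq> 0" "x * (x + 1) \<noteq> 0" using x_pos by auto
  then have "x * y * q * (n * y / (x - 1) - n * y / x) = n * y * (q * y / (x - 1))"
    and "y * x * (n * (y - 1) / x - n * y / x) = - n * y"
    and "u * x * (n * y / (x + 1) - n * y / x) = - n * y * (u / (x + 1))"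
    and "u * y * (n * (y + 1) / x - n * y / x) = n * y * (u / x)"
    and "x * (q * y / (x - 1)) = q * y + q * y / (x - 1)"
    and "x * (u / (x + 1)) = u - u / (x + 1)"
    by (simp_all add: field_simps)
  then have drift: "x * y * q * (n * y / (x - 1) - n * y / x) + y * x * (n * (y - 1) / x - n * y / x)
         + u * x * (n * y / (x + 1) - n * y / x) + u * y * (n * (y + 1) / x - n * y / x) = n * y * B"
    and xB: "x * B = - (x - q * y) + q * y / (x - 1) + u / (x + 1)"
    using \<open>x \<noteq> 0\<close> by (simp_all add: B_def algebra_simps)
  have "n / (x - 1) \<le> n / (cs * n / 4)"
    using x1 x_pos n_pos \<open>cs > 0\<close> by (intro divide_left_mono) auto
  also have "\<dots> = 4 / cs" using n_pos by simp
  finally have "n / (x - 1) \<le> 4 / cs" .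
  moreover have "n / (x + 1) \<le> n / (x - 1)"
    using x_pos n_pos by (intro divide_left_mono) auto
  moreover have "q * y / (x - 1) \<le> n / (x - 1)" and "u / (x + 1) \<le> n / (x + 1)"
    using \<open>q * y \<le> n\<close> x_pos total \<open>y \<ge> 0\<close> by (simp_all add: divide_right_mono)
  moreover have "4 / cs + 4 / cs \<le> cs * n / 10"
    using \<open>cs > 0\<close> \<open>80 \<le> cs * cs * n\<close> by (simp add: field_simps)
  moreover have "(2 * cs / 5) * (n - 1) = 2 / 5 * (cs * n) - 2 / 5 * cs"
    by (simp add: field_simps)
  \<comment> \<open>the bias contributes \<open>- c\<^sub>s n / 2\<close>, the two corrections at most \<open>4 / c\<^sub>s\<close> each\<close>
  ultimately have "x * B \<le> - (2 * cs / 5) * (n - 1)"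
    unfolding xB using bias \<open>cs > 0\<close> by linarith
  then have "B \<le> - (2 * cs / 5) * (n - 1) / x"
    using x_pos by (subst pos_le_divide_eq) (auto simp: mult.commute)
  then have "n * y * B \<le> n * y * (- (2 * cs / 5) * (n - 1) / x)"
    using n_pos \<open>y \<ge> 0\<close> by (intro mult_left_mono) auto
  also have "n * y * (- (2 * cs / 5) * (n - 1) / x)
      = n * (n - 1) * (- (2 * cs / (5 * n)) * (n * y / x))"
    using n_pos by (simp add: field_simps)
  finally show ?thesis
    unfolding drift .
qed

lemma exp_drift_le:
  fixes x y u n q l k :: real
  assumes "0 \<le> l" "l \<le> 1" "0 \<le> q" "q \<le> 1" "x \<ge> 0" "y \<ge> 0" "u \<ge> 0"
    and total: "x + y + u = n" and bias: "x - q * y \<ge> 0" and "n \<ge> 2"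
  defines "g \<equiv> \<lambda>x y. exp (- l * (x - q * y - k))"
  shows "x * y * q * (g (x - 1) y - g x y) + y * x * (g x (y - 1) - g x y)
         + u * x * (g (x + 1) y - g x y) + u * y * (g x (y + 1) - g x y)
       \<le> n * (n - 1) * (2 * l\<^sup>2 * g x y)"
proof -
  have quad: "exp z - 1 \<le> z + l\<^sup>2" if "\<bar>z\<bar> \<le> l" for z
  proof -
    have "z\<^sup>2 \<le> l\<^sup>2" using power_mono[OF that abs_ge_zero, of 2] by simp
    then show ?thesis using exp_le_quadratic[of z] that \<open>l \<le> 1\<close> by simp
  qed
  have lq: "\<bar>l * q\<bar> \<le> l" using assms by (simp add: abs_mult mult_left_le)
  have nonneg: "x * y * q \<ge> 0" "y * x \<ge> 0" "u * x \<ge> 0" "u * y \<ge> 0"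
    using assms by simp_all
  have "x * y * q * (exp l - 1) + y * x * (exp (- (l * q)) - 1)
          + u * x * (exp (- l) - 1) + u * y * (exp (l * q) - 1)
      \<le> x * y * q * (l + l\<^sup>2) + y * x * (- (l * q) + l\<^sup>2)
          + u * x * (- l + l\<^sup>2) + u * y * (l * q + l\<^sup>2)"
    using mult_left_mono[OF quad nonneg(1), of l] mult_left_mono[OF quad nonneg(2), of "- (l * q)"]
      mult_left_mono[OF quad nonneg(3), of "- l"] mult_left_mono[OF quad nonneg(4), of "l * q"]
      lq \<open>0 \<le> l\<close> by simp
  \<comment> \<open>the first-order terms add up to the drift \<open>u (x - q y) \<ge> 0\<close> of the bias\<close>
  also have "\<dots> = l\<^sup>2 * (x * y * q + x * y + u * x + u * y) - l * u * (x - q * y)"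
    by (simp add: algebra_simps)
  also have "\<dots> \<le> l\<^sup>2 * (n * n)"
  proof -
    have "x * y * q \<le> x * y" using assms by (simp add: mult_left_le)
    moreover have "n * n = x * x + y * y + u * u + 2 * (x * y) + 2 * (u * x) + 2 * (u * y)"
      unfolding total[symmetric] by (simp add: algebra_simps)
    moreover have "0 \<le> x * x" "0 \<le> y * y" "0 \<le> u * u" by simp_all
    ultimately have "x * y * q + x * y + u * x + u * y \<le> n * n"
      using nonneg by linarith
    moreover have "0 \<le> l * u * (x - q * y)" using assms by simp
    ultimately show ?thesis
      using mult_left_mono[of _ _ "l\<^sup>2"] by (smt (verit) zero_le_power2)
  qed
  also have "\<dots> \<le> 2 * l\<^sup>2 * (n * (n - 1))"
  proof -
    have "2 * n \<le> n * n" using mult_right_mono[OF \<open>n \<ge> 2\<close>, of n] \<open>n \<ge> 2\<close> by simp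
    then have "n * n \<le> 2 * (n * (n - 1))" by (simp add: algebra_simps)
    from mult_left_mono[OF this, of "l\<^sup>2"] show ?thesis by (simp add: algebra_simps)
  qed
  finally have S: "x * y * q * (exp l - 1) + y * x * (exp (- (l * q)) - 1)
          + u * x * (exp (- l) - 1) + u * y * (exp (l * q) - 1) \<le> 2 * l\<^sup>2 * (n * (n - 1))" .
  have shift: "g (x + a) (y + b) = g x y * exp (- l * (a - q * b))" for a b
  proof -
    have "- l * (x + a - q * (y + b) - k) = - l * (x - q * y - k) + - l * (a - q * b)"
      by (simp add: algebra_simps)
    then show ?thesis by (simp only: g_def exp_add)
  qed
  have "x * y * q * (g (x - 1) y - g x y) + y * x * (g x (y - 1) - g x y)
         + u * x * (g (x + 1) y - g x y) + u * y * (g x (y + 1) - g x y)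
      = g x y * (x * y * q * (exp l - 1) + y * x * (exp (- (l * q)) - 1)
          + u * x * (exp (- l) - 1) + u * y * (exp (l * q) - 1))"
    using shift[of "- 1" 0] shift[of 0 "- 1"] shift[of 1 0] shift[of 0 1]
    by (simp add: algebra_simps)
  also have "\<dots> \<le> g x y * (2 * l\<^sup>2 * (n * (n - 1)))"
    by (rule mult_left_mono[OF S]) (simp add: g_def)
  finally show ?thesis by (simp add: algebra_simps)
qed

definition minority_ratio :: "nat \<Rightarrow> cfg \<Rightarrow> real" where
  "minority_ratio n c = real n * real (cnt2 n c) / real (cnt1 n c)"

definition bias_potential :: "real \<Rightarrow> real \<Rightarrow> real \<Rightarrow> nat \<Rightarrow> cfg \<Rightarrow> real" where
  "bias_potential l cs p n c = exp (- l * (wbias p n c - cs * real n / 2))"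

lemma minority_ratio_drift:
  assumes "n \<ge> 2" "0 \<le> p" "p \<le> 1" "cs > 0" "8 \<le> cs * real n" "80 \<le> cs * cs * real n"
    and "cs * real n / 2 \<le> wbias p n c"
  shows "measure_pmf.expectation (usd_step n p c) (minority_ratio n)
         \<le> (1 - 2 * cs / (5 * real n)) * minority_ratio n c"
proof -
  define f :: "real \<Rightarrow> real \<Rightarrow> real" where "f = (\<lambda>x y. real n * y / x)"
  have V: "minority_ratio n = (\<lambda>c'. f (real (cnt1 n c')) (real (cnt2 n c')))"
    by (simp add: fun_eq_iff f_def minority_ratio_def)
  let ?E = "measure_pmf.expectation (usd_step n p c) (minority_ratio n)"
  have "real n * (real n - 1) * (?E - minority_ratio n c)
      \<le> real n * (real n - 1) * (- (2 * cs / (5 * real n)) * minority_ratio n c)"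
    unfolding V usd_step_drift[OF assms(1-3), where f = f and c = c] unfolding f_def
    by (rule ratio_drift_le) (use assms real_cnt_total[of n c] in \<open>auto simp: wbias_def\<close>)
  then have "?E - minority_ratio n c \<le> - (2 * cs / (5 * real n)) * minority_ratio n c"
    by (rule mult_left_le_imp_le) (use \<open>n \<ge> 2\<close> in simp)
  then show ?thesis by (simp add: algebra_simps)
qed

lemma bias_potential_drift:
  assumes "n \<ge> 2" "0 \<le> p" "p \<le> 1" "cs > 0" "0 \<le> l" "l \<le> 1"
    and "cs * real n / 2 \<le> wbias p n c"
  shows "measure_pmf.expectation (usd_step n p c) (bias_potential l cs p n)
         \<le> (1 + 2 * l\<^sup>2) * bias_potential l cs p n c"
proof -
  define g :: "real \<Rightarrow> real \<Rightarrow> real"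
    where "g = (\<lambda>x y. exp (- l * (x - (1 - p) * y - cs * real n / 2)))"
  have U: "bias_potential l cs p n = (\<lambda>c'. g (real (cnt1 n c')) (real (cnt2 n c')))"
    by (simp add: fun_eq_iff g_def bias_potential_def wbias_def)
  let ?E = "measure_pmf.expectation (usd_step n p c) (bias_potential l cs p n)"
  have "0 \<le> cs * real n" using \<open>cs > 0\<close> by simp
  then have bias: "real (cnt1 n c) - (1 - p) * real (cnt2 n c) \<ge> 0"
    using assms(7) unfolding wbias_def by linarith
  have "real n * (real n - 1) * (?E - bias_potential l cs p n c)
      \<le> real n * (real n - 1) * (2 * l\<^sup>2 * bias_potential l cs p n c)"
    unfolding U usd_step_drift[OF assms(1-3), where f = g and c = c] unfolding g_def
    by (rule exp_drift_le)
       (use assms bias real_cnt_total[of n c] in \<open>auto simp: wbias_def\<close>)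
  then have "?E - bias_potential l cs p n c \<le> 2 * l\<^sup>2 * bias_potential l cs p n c"
    by (rule mult_left_le_imp_le) (use \<open>n \<ge> 2\<close> in simp)
  then show ?thesis by (simp add: algebra_simps)
qed

section \<open>Absorption\<close>

lemma power_le_exp:
  fixes x :: real
  assumes "0 \<le> 1 + x"
  shows "(1 + x) ^ k \<le> exp (x * real k)"
proof -
  have "(1 + x) ^ k \<le> exp x ^ k"
    by (rule power_mono) (use assms exp_ge_add_one_self[of x] in \<open>auto simp: add.commute\<close>)
  also have "\<dots> = exp (x * real k)"
    by (simp add: exp_of_nat_mult[symmetric] mult.commute)
  finally show ?thesis .
qed

lemma minority_ratio_ge_one:
  assumes "p \<le> 1" "0 < wbias p n c" "cnt2 n c \<noteq> 0"
  shows "1 \<le> minority_ratio n c"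
proof -
  have x_pos: "0 < real (cnt1 n c)"
    using assms(1,2) wbias_le_cnt1[of p n c] by linarith
  have "real (cnt1 n c) \<le> real n"
    using real_cnt_total[of n c] by linarith
  also have "\<dots> \<le> real n * real (cnt2 n c)"
    using mult_left_mono[of 1 "real (cnt2 n c)" "real n"] assms(3) by simp
  finally show ?thesis
    using x_pos by (simp add: minority_ratio_def)
qed

lemma minority_ratio_le:
  assumes "p \<le> 1" "0 < cs" "0 < n" "cs * real n \<le> wbias p n c"
  shows "minority_ratio n c \<le> real n / cs"
proof -
  have "cs * real n \<le> real (cnt1 n c)"
    using assms(1,4) wbias_le_cnt1[of p n c] by linarith
  moreover have "real (cnt2 n c) \<le> real n"
    using real_cnt_total[of n c] by linarith
  moreover have "0 < cs * real n" using assms(2,3) by simp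
  ultimately have "real n * real (cnt2 n c) / real (cnt1 n c) \<le> real n * real n / (cs * real n)"
    by (intro frac_le mult_left_mono) auto
  then show ?thesis
    using assms(3) by (simp add: minority_ratio_def)
qed

lemma bias_potential_power_le:
  assumes "0 \<le> l" "real K \<le> T" "cs * real n \<le> wbias p n c"
  shows "(1 + 2 * l\<^sup>2) ^ K * bias_potential l cs p n c \<le> exp (2 * l\<^sup>2 * T - l * cs * real n / 2)"
proof -
  have "(1 + 2 * l\<^sup>2) ^ K \<le> exp (2 * l\<^sup>2 * real K)"
    by (rule power_le_exp) simp
  also have "\<dots> \<le> exp (2 * l\<^sup>2 * T)"
    using assms(2) by (simp add: mult_left_mono)
  finally have "(1 + 2 * l\<^sup>2) ^ K \<le> exp (2 * l\<^sup>2 * T)" .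
  moreover have "bias_potential l cs p n c \<le> exp (- (l * cs * real n / 2))"
    using mult_left_mono[of "cs * real n / 2" "wbias p n c - cs * real n / 2" l] assms(1,3)
    by (simp add: bias_potential_def)
  ultimately have "(1 + 2 * l\<^sup>2) ^ K * bias_potential l cs p n c
      \<le> exp (2 * l\<^sup>2 * T) * exp (- (l * cs * real n / 2))"
    by (intro mult_mono) (auto simp: bias_potential_def)
  then show ?thesis
    by (simp add: exp_add[symmetric])
qed

lemma minority_ratio_power_le:
  assumes "p \<le> 1" "0 < cs" "0 < n" "2 * cs \<le> 5 * real n" "T - 1 \<le> real K"
    and "cs * real n \<le> wbias p n c"
  shows "(1 - 2 * cs / (5 * real n)) ^ K * minority_ratio n c
         \<le> exp (2 * cs / (5 * real n) * (1 - T)) * (real n / cs)"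
proof -
  define r where "r = 2 * cs / (5 * real n)"
  have r: "0 \<le> r" "r \<le> 1"
    using assms(2-4) by (simp_all add: r_def field_simps)
  have "(1 - r) ^ K \<le> exp (- r * real K)"
    using power_le_exp[of "- r" K] r by simp
  also have "\<dots> \<le> exp (r * (1 - T))"
    using mult_left_mono[OF assms(5) r(1)] by (simp add: algebra_simps)
  finally have "(1 - r) ^ K \<le> exp (r * (1 - T))" .
  moreover have "0 \<le> minority_ratio n c"
    by (simp add: minority_ratio_def)
  ultimately show ?thesis
    unfolding r_def[symmetric]
    using minority_ratio_le[OF assms(1-3,6)] r by (intro mult_mono) auto
qed

lemma prob_unabsorbed_le_potential_sum:
  assumes "0 \<le> p" "p \<le> 1" "cs > 0" "n \<ge> 2" "8 \<le> cs * real n" "80 \<le> cs * cs * real n"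
    and "0 \<le> l" "l \<le> 1" "2 * cs \<le> 5 * real n"
  shows "measure_pmf.prob (map_pmf last (usd_traj n p K c)) {c'. cnt2 n c' \<noteq> 0}
         \<le> (1 + 2 * l\<^sup>2) ^ K * bias_potential l cs p n c
           + (1 - 2 * cs / (5 * real n)) ^ K * minority_ratio n c"
proof (rule prob_unabsorbed_le_potentials[where G = "\<lambda>c. cs * real n / 2 \<le> wbias p n c"])
  show "0 \<le> 1 - 2 * cs / (5 * real n)" "1 \<le> 1 + 2 * l\<^sup>2"
    using assms(4,9) by simp_all
  show "0 \<le> bias_potential l cs p n c'" "0 \<le> minority_ratio n c'" for c'
    by (simp_all add: bias_potential_def minority_ratio_def)
  show "1 \<le> bias_potential l cs p n c'" if "\<not> cs * real n / 2 \<le> wbias p n c'" for c'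
    using that assms(7) by (simp add: bias_potential_def mult_nonneg_nonpos)
  have "0 < cs * real n / 2" using assms(3,4) by simp
  then show "1 \<le> minority_ratio n c'" if "cs * real n / 2 \<le> wbias p n c'" "cnt2 n c' \<noteq> 0" for c'
    using that(1) by (intro minority_ratio_ge_one[OF assms(2) _ that(2)]) linarith
  show "measure_pmf.expectation (usd_step n p c') (bias_potential l cs p n)
        \<le> (1 + 2 * l\<^sup>2) * bias_potential l cs p n c'" if "cs * real n / 2 \<le> wbias p n c'" for c'
    using assms(1-4,7,8) that by (intro bias_potential_drift)
  show "measure_pmf.expectation (usd_step n p c') (minority_ratio n)
        \<le> (1 - 2 * cs / (5 * real n)) * minority_ratio n c'" if "cs * real n / 2 \<le> wbias p n c'" for c'
    using assms(1-6) that by (intro minority_ratio_drift)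
qed (rule assms(4))

lemma prob_unabsorbed_le:
  fixes p cs :: real and n :: nat and c :: cfg
  assumes "0 \<le> p" "p \<le> 1" "cs > 0"
    and "n \<ge> 2" "80 \<le> cs * cs * real n" "8 \<le> cs * real n" "1 \<le> ln (real n)"
    and bias_tail: "exp (- (cs ^ 3 / 640 * real n / ln (real n))) \<le> 1 / (2 * (real n)\<^sup>2)"
    and ratio_tail: "exp 1 * real n / (cs * real n ^ 8) \<le> 1 / (2 * (real n)\<^sup>2)"
    and init: "cs * real n \<le> wbias p n c"
  defines "T \<equiv> 20 / cs * real n * ln (real n)"
  shows "measure_pmf.prob (map_pmf last (usd_traj n p (nat \<lfloor>T\<rfloor>) c)) {c'. cnt2 n c' \<noteq> 0}
         \<le> 1 / (real n)\<^sup>2"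
proof -
  define L where "L = ln (real n)"
  define K where "K = nat \<lfloor>T\<rfloor>"
  \<comment> \<open>balances the growth \<open>exp (2 l\<^sup>2 T)\<close> of \<open>U\<close> against its initial value\<close>
  define l where "l = cs\<^sup>2 / (160 * L)"
  have n: "real n \<ge> 2" "L \<ge> 1" using assms(4,7) by (simp_all add: L_def)
  have "cs * real n \<le> real n"
    using init wbias_le_cnt1[OF assms(2), of n c] real_cnt_total[of n c] by linarith
  then have "cs \<le> 1" using n by simp
  then have l: "0 \<le> l" "l \<le> 1"
    using n power_le_one[of cs 2] \<open>cs > 0\<close> by (simp_all add: l_def field_simps)
  have small_rate: "2 * cs \<le> 5 * real n" using \<open>cs \<le> 1\<close> n by simp
  have T: "T - 1 \<le> real K" "real K \<le> T"
    using n \<open>cs > 0\<close> by (simp_all add: K_def T_def)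
  note prob_unabsorbed_le_potential_sum[OF assms(1-4,6,5) l small_rate, of K c]
  also have "(1 + 2 * l\<^sup>2) ^ K * bias_potential l cs p n c \<le> 1 / (2 * (real n)\<^sup>2)"
  proof -
    have "2 * l\<^sup>2 * T - l * cs * real n / 2 = - (cs ^ 3 / 640 * real n / L)"
      using n \<open>cs > 0\<close> by (simp add: l_def T_def L_def power2_eq_square power3_eq_cube field_simps)
    then show ?thesis
      using bias_potential_power_le[OF l(1) T(2) init] bias_tail by (simp add: L_def)
  qed
  also have "(1 - 2 * cs / (5 * real n)) ^ K * minority_ratio n c \<le> 1 / (2 * (real n)\<^sup>2)"
  proof -
    have "2 * cs / (5 * real n) * (1 - T) \<le> 1 - 8 * L"
      using n \<open>cs > 0\<close> \<open>cs \<le> 1\<close> by (simp add: T_def L_def field_simps)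
    then have "exp (2 * cs / (5 * real n) * (1 - T)) \<le> exp (1 - 8 * L)"
      by simp
    also have "\<dots> = exp 1 / real n ^ 8"
      using exp_of_nat_mult[of 8 L] n by (simp add: L_def exp_diff)
    finally have "exp (2 * cs / (5 * real n) * (1 - T)) * (real n / cs)
        \<le> exp 1 / real n ^ 8 * (real n / cs)"
      using \<open>cs > 0\<close> by (intro mult_right_mono) auto
    also have "\<dots> = exp 1 * real n / (cs * real n ^ 8)"
      by simp
    finally show ?thesis
      using minority_ratio_power_le[OF assms(2,3) _ small_rate T(1) init] n ratio_tail by simp
  qed
  finally show ?thesis by (simp add: K_def)
qed

lemma prob_absorbed_within_ge:
  assumes "real K \<le> T"
  shows "1 - measure_pmf.prob (map_pmf last (usd_traj n p K c)) {c'. cnt2 n c' \<noteq> 0}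
         \<le> measure_pmf.prob (usd_traj n p K c)
              {xs. \<exists>t < length xs. real t \<le> T \<and> cnt2 n (xs ! t) = 0}"
proof -
  let ?M = "usd_traj n p K c"
  have "1 - measure_pmf.prob (map_pmf last ?M) {c'. cnt2 n c' \<noteq> 0}
      = measure_pmf.prob ?M ({xs. cnt2 n (last xs) = 0} \<inter> set_pmf ?M)"
    by (simp add: measure_Int_set_pmf measure_pmf.prob_compl[symmetric] Compl_eq_Diff_UNIV[symmetric]
                  vimage_def Collect_neg_eq[symmetric])
  also have "\<dots> \<le> measure_pmf.prob ?M {xs. \<exists>t < length xs. real t \<le> T \<and> cnt2 n (xs ! t) = 0}"
  proof (rule measure_pmf.finite_measure_mono)
    show "{xs. cnt2 n (last xs) = 0} \<inter> set_pmf ?M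
          \<subseteq> {xs. \<exists>t < length xs. real t \<le> T \<and> cnt2 n (xs ! t) = 0}"
    proof clarify
      fix xs assume "cnt2 n (last xs) = 0" "xs \<in> set_pmf ?M"
      moreover from this(2) have "length xs = Suc K" by (rule length_usd_traj)
      moreover from this have "last xs = xs ! K" by (cases xs rule: rev_cases) auto
      ultimately show "\<exists>t < length xs. real t \<le> T \<and> cnt2 n (xs ! t) = 0"
        using assms by (intro exI[of _ K]) auto
    qed
  qed simp
  finally show ?thesis .
qed

lemma eventually_prob_absorbed_ge:
  fixes p cs :: real
  assumes "0 \<le> p" "p \<le> 1" "cs > 0"
  shows "\<forall>\<^sub>F n in sequentially. \<forall>c. cs * real n \<le> wbias p n c \<longrightarrow>
           1 - 1 / (real n)\<^sup>2
           \<le> measure_pmf.prob (usd_traj n p (nat \<lfloor>20 / cs * real n * ln (real n)\<rfloor>) c)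
                {xs. \<exists>t < length xs. real t \<le> 20 / cs * real n * ln (real n) \<and> cnt2 n (xs ! t) = 0}"
proof -
  have "cs ^ 3 / 640 > 0" "cs * cs > 0" using assms by auto
  then have "\<forall>\<^sub>F n in sequentially. 2 \<le> n \<and> 80 \<le> cs * cs * real n \<and> 8 \<le> cs * real n
           \<and> 1 \<le> ln (real n)
           \<and> exp (- (cs ^ 3 / 640 * real n / ln (real n))) \<le> 1 / (2 * (real n)\<^sup>2)
           \<and> exp 1 * real n / (cs * real n ^ 8) \<le> 1 / (2 * (real n)\<^sup>2)"
    by (intro eventually_conj eventually_ge_at_top) (use assms in real_asymp)+
  then show ?thesis
  proof eventually_elim
    case (elim n)
    show ?case
    proof (intro allI impI)
      fix c assume init: "cs * real n \<le> wbias p n c"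
      define T where "T = 20 / cs * real n * ln (real n)"
      have "T \<ge> 0" using elim \<open>cs > 0\<close> by (simp add: T_def)
      then have "1 - measure_pmf.prob (map_pmf last (usd_traj n p (nat \<lfloor>T\<rfloor>) c)) {c'. cnt2 n c' \<noteq> 0}
          \<le> measure_pmf.prob (usd_traj n p (nat \<lfloor>T\<rfloor>) c)
               {xs. \<exists>t < length xs. real t \<le> T \<and> cnt2 n (xs ! t) = 0}"
        by (intro prob_absorbed_within_ge) simp
      moreover have "measure_pmf.prob (map_pmf last (usd_traj n p (nat \<lfloor>T\<rfloor>) c)) {c'. cnt2 n c' \<noteq> 0}
          \<le> 1 / (real n)\<^sup>2"
        unfolding T_def using elim init by (intro prob_unabsorbed_le[OF assms]) auto
      ultimately show "1 - 1 / (real n)\<^sup>2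
           \<le> measure_pmf.prob (usd_traj n p (nat \<lfloor>20 / cs * real n * ln (real n)\<rfloor>) c)
                {xs. \<exists>t < length xs. real t \<le> 20 / cs * real n * ln (real n) \<and> cnt2 n (xs ! t) = 0}"
        unfolding T_def by linarith
    qed
  qed
qed

theorem lemma2:
  fixes p c_s :: real
  assumes "0 \<le> p" and "p \<le> 1" and "c_s > 0"
  shows "\<exists>n0::nat. \<forall>n\<ge>n0. \<forall>c :: cfg.
           wbias p n c \<ge> c_s * real n \<longrightarrow>
           measure_pmf.prob
             (usd_traj n p (nat \<lfloor>20 / c_s * real n * ln (real n)\<rfloor>) c)
             {xs. \<exists>t < length xs. real t \<le> 20 / c_s * real n * ln (real n)
                                  \<and> cnt2 n (xs ! t) = 0}
           \<ge> 1 - 1 / (real n)^2"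
  using eventually_prob_absorbed_ge[OF assms] by (simp add: eventually_sequentially)

end
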